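(* Let $\Lambda=\{\lambda_n\}_{n\ge1}\subset\mathbb{D}$ be a Blaschke sequence (listed with multiplicity), $h\in H^2$, and $n\ge1$. Write $\prod_{l=1}^n(z-\lambda_l)=\prod_{l=1}^r(z-\mu_l)^{k_l}$ with $\mu_1,\dots,\mu_r$ distinct and $k_l\ge1$. Then for every $\zeta\in\mathbb{T}$, $$(A_{\overline{h}}\gamma_n)(\zeta)=\sqrt{1-|\lambda_n|^2}\sum_{l=1}^r\frac{1}{(k_l-1)!}\,\overline{\frac{d^{k_l-1}}{dw^{k_l-1}}\left[\frac{h(w)\prod_{m=1}^{n-1}(1-\overline{\lambda_m}w)}{(1-\overline{\zeta}w)\prod_{j=1,j\ne l}^r(w-\mu_j)^{k_j}}\right]_{w=\mu_l}}.$$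
   Context: $\mathbb{D}$ is the open unit disk, $\mathbb{T}$ the unit circle, $H^2$ the Hardy space. $I$ denotes the Blaschke product with zeros $\Lambda$, $K_I=H^2\ominus IH^2$, $P_I$ the orthogonal projection of $L^2(\mathbb{T})$ onto $K_I$, and $A_{\overline{h}}f=P_I(\overline{h}f)$. For $\lambda\in\mathbb{D}$, $b_\lambda(z)=\frac{z-\lambda}{1-\overline{\lambda}z}$, and $\gamma_n(z)=\frac{\sqrt{1-|\lambda_n|^2}}{1-\overline{\lambda_n}z}\prod_{k=1}^{n-1}b_{\lambda_k}(z)$. With $B_n=\prod_{k=1}^nb_{\lambda_k}$, $A_{\overline{h}}\gamma_n=P_+(\overline{h}\gamma_n)$ lies in $K_{B_n}$, a space of rational functions with no poles in the closed disk, and $(A_{\overline{h}}\gamma_n)(\zeta)$ is the value of this rational function at $\zeta$. *)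

theory Defs
  imports "HOL-Analysis.Analysis"
begin

(* Blaschke sequence indexed from 1: lam 1, lam 2, ... (lam 0 is irrelevant) *)
definition blaschke_seq :: "(nat \<Rightarrow> complex) \<Rightarrow> bool" where
  "blaschke_seq lam \<longleftrightarrow> (\<forall>n\<ge>1. norm (lam n) < 1) \<and> summable (\<lambda>n. 1 - norm (lam (Suc n)))"

definition taylor_coeff :: "(complex \<Rightarrow> complex) \<Rightarrow> nat \<Rightarrow> complex" where
  "taylor_coeff f k = (deriv ^^ k) f 0 / of_nat (fact k)"

definition H2 :: "(complex \<Rightarrow> complex) set" where
  "H2 = {f. f holomorphic_on ball 0 1 \<and> summable (\<lambda>k. (norm (taylor_coeff f k))\<^sup>2)}"

definition H2_inner :: "(complex \<Rightarrow> complex) \<Rightarrow> (complex \<Rightarrow> complex) \<Rightarrow> complex" where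
  "H2_inner f g = (\<Sum>k. taylor_coeff f k * cnj (taylor_coeff g k))"

definition bfac :: "complex \<Rightarrow> complex \<Rightarrow> complex" where
  "bfac a z = (z - a) / (1 - cnj a * z)"

definition gamma_fn :: "(nat \<Rightarrow> complex) \<Rightarrow> nat \<Rightarrow> complex \<Rightarrow> complex" where
  "gamma_fn lam n z = complex_of_real (sqrt (1 - (norm (lam n))\<^sup>2)) / (1 - cnj (lam n) * z)
      * (\<Prod>k=1..n-1. bfac (lam k) z)"

(* A_{conj h} f = P_+(conj h * f), as a holomorphic function on the disk:
   the k-th Fourier coefficient of conj(h) f on the circle is
   <conj(h) f, z^k>_{L^2} = <f, z^k h>_{H^2}. *)
definition toeplitz_conj :: "(complex \<Rightarrow> complex) \<Rightarrow> (complex \<Rightarrow> complex) \<Rightarrow> complex \<Rightarrow> complex" where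
  "toeplitz_conj h f z = (\<Sum>k. H2_inner f (\<lambda>w. w ^ k * h w) * z ^ k)"

end

(*
  When f is
  holomorphic on a disk of radius R > 1, its reflection conj (f (1 / conj w)) is holomorphic for
  |w| > 1/R, and expanding it at infinity turns <f, g> into conj of (1/(2 pi i)) times the
  integral of g(w) conj (f (1 / conj w)) / w over a circle |w| = rho with 1/R < rho < 1.
  Summing the geometric series in z then exhibits A_{conj h} f as conj of (1/(2 pi i)) times a
  Cauchy-type integral over that circle, a power series in z of radius at least 1/rho > 1, so it
  is continuous at zeta and its boundary value there is that integral at z = zeta. For f = gamma_n
  the integrand is h times a rational function whose poles inside the circle are the mu_l, with
  multiplicities k_l, and the residue theorem produces the stated sum.
*)

theory Submission imports Defs "HOL-Complex_Analysis.Complex_Analysis" begin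

lemma sums_contour_integral_circlepath:
  fixes f :: "nat \<Rightarrow> complex \<Rightarrow> complex"
  assumes "0 < \<rho>"
    and "\<And>j. (f j has_contour_integral I j) (circlepath z \<rho>)"
    and "\<And>j w. w \<in> sphere z \<rho> \<Longrightarrow> norm (f j w) \<le> M j"
    and "summable M"
  shows "I sums contour_integral (circlepath z \<rho>) (\<lambda>w. \<Sum>j. f j w)"
proof -
  have partial: "((\<lambda>w. \<Sum>j<m. f j w) has_contour_integral (\<Sum>j<m. I j)) (circlepath z \<rho>)" for m
    using assms(2) by (intro has_contour_integral_sum) auto
  have "\<forall>\<^sub>F m in sequentially. (\<lambda>w. \<Sum>j<m. f j w) contour_integrable_on circlepath z \<rho>"
    using partial unfolding contour_integrable_on_def by (intro always_eventually allI) blast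
  from contour_integral_uniform_limit_circlepath[OF this Weierstrass_m_test[OF assms(3,4)] _ assms(1)]
  have "(\<lambda>m. contour_integral (circlepath z \<rho>) (\<lambda>w. \<Sum>j<m. f j w))
          \<longlonglongrightarrow> contour_integral (circlepath z \<rho>) (\<lambda>w. \<Sum>j. f j w)"
    by simp
  moreover have "contour_integral (circlepath z \<rho>) (\<lambda>w. \<Sum>j<m. f j w) = (\<Sum>j<m. I j)" for m
    using partial contour_integral_unique by blast
  ultimately show ?thesis
    by (simp add: sums_def)
qed

lemma has_contour_integral_circlepath_if_continuous:
  assumes "continuous_on (sphere z \<rho>) f" "0 \<le> \<rho>"
  shows "(f has_contour_integral contour_integral (circlepath z \<rho>) f) (circlepath z \<rho>)"
  using assms by (intro has_contour_integral_integral contour_integrable_continuous_circlepath) simp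

lemma residue_div_prod_powers:
  fixes G :: "complex \<Rightarrow> complex" and mu :: "'a \<Rightarrow> complex" and k :: "'a \<Rightarrow> nat"
  assumes holG: "G holomorphic_on S" and "open S" "mu l \<in> S"
    and I: "finite I" "inj_on mu I" "l \<in> I" and "1 \<le> k l"
  shows "residue (\<lambda>w. G w / (\<Prod>j\<in>I. (w - mu j) ^ k j)) (mu l) =
           (deriv ^^ (k l - 1)) (\<lambda>w. G w / (\<Prod>j\<in>I - {l}. (w - mu j) ^ k j)) (mu l) / fact (k l - 1)"
proof -
  define F where "F w = G w / (\<Prod>j\<in>I - {l}. (w - mu j) ^ k j)" for w
  define A where "A = S - mu ` (I - {l})"
  have "open A"
    unfolding A_def using I \<open>open S\<close> by (intro open_Diff finite_imp_closed) auto
  moreover have "mu l \<in> A"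
    unfolding A_def using \<open>mu l \<in> S\<close> inj_onD[OF I(2) _ I(3)] by auto
  moreover have "(\<Prod>j\<in>I - {l}. (w - mu j) ^ k j) \<noteq> 0" if "w \<in> A" for w
    using that I(1) by (auto simp: A_def prod_zero_iff)
  then have "F holomorphic_on A"
    unfolding F_def A_def by (intro holomorphic_intros holomorphic_on_subset[OF holG]) auto
  ultimately have "residue (\<lambda>w. F w / (w - mu l) ^ Suc (k l - 1)) (mu l) =
                     (deriv ^^ (k l - 1)) F (mu l) / fact (k l - 1)"
    by (rule residue_holomorphic_over_power)
  moreover have "(\<lambda>w. G w / (\<Prod>j\<in>I. (w - mu j) ^ k j)) = (\<lambda>w. F w / (w - mu l) ^ Suc (k l - 1))"
    using \<open>1 \<le> k l\<close> by (simp add: fun_eq_iff F_def prod.remove[OF I(1) I(3)] mult.commute)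
  ultimately show ?thesis
    unfolding F_def by simp
qed

lemma has_contour_integral_circlepath_div_prod_powers:
  fixes G :: "complex \<Rightarrow> complex" and mu :: "'a \<Rightarrow> complex" and k :: "'a \<Rightarrow> nat"
  assumes holG: "G holomorphic_on ball z R" and \<rho>: "0 < \<rho>" "\<rho> < R"
    and I: "finite I" "inj_on mu I" and k: "\<And>l. l \<in> I \<Longrightarrow> 1 \<le> k l"
    and mu: "\<And>l. l \<in> I \<Longrightarrow> norm (mu l - z) < \<rho>"
  shows "((\<lambda>w. G w / (\<Prod>j\<in>I. (w - mu j) ^ k j)) has_contour_integral
           2 * pi * \<i> * (\<Sum>l\<in>I. (deriv ^^ (k l - 1))
              (\<lambda>w. G w / (\<Prod>j\<in>I - {l}. (w - mu j) ^ k j)) (mu l) / fact (k l - 1)))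
         (circlepath z \<rho>)"
proof -
  define F where "F w = G w / (\<Prod>j\<in>I. (w - mu j) ^ k j)" for w
  have holF: "F holomorphic_on ball z R - mu ` I"
    unfolding F_def using I(1)
    by (intro holomorphic_intros holomorphic_on_subset[OF holG]) (auto simp: prod_zero_iff)
  have path: "path_image (circlepath z \<rho>) \<subseteq> ball z R - mu ` I"
    using mu \<rho> by (force simp: dist_norm norm_minus_commute)
  have "contour_integral (circlepath z \<rho>) F =
          2 * pi * \<i> * (\<Sum>p\<in>mu ` I. winding_number (circlepath z \<rho>) p * residue F p)"
  proof (rule Residue_theorem[OF _ _ _ holF _ _ path])
    show "\<forall>w. w \<notin> ball z R \<longrightarrow> winding_number (circlepath z \<rho>) w = 0"
      using \<rho> by (auto intro!: winding_number_zero_outside[of _ "cball z \<rho>"] simp: dist_norm)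
  qed (use I in auto)
  also have "\<dots> = 2 * pi * \<i> * (\<Sum>l\<in>I. residue F (mu l))"
    using mu by (simp add: sum.reindex[OF I(2)] winding_number_circlepath)
  also have "\<dots> = 2 * pi * \<i> * (\<Sum>l\<in>I. (deriv ^^ (k l - 1))
              (\<lambda>w. G w / (\<Prod>j\<in>I - {l}. (w - mu j) ^ k j)) (mu l) / fact (k l - 1))"
    unfolding F_def using I k mu \<rho>
    by (intro arg_cong[where f = "(*) _"] sum.cong refl residue_div_prod_powers[OF holG])
       (force simp: dist_norm norm_minus_commute)+
  finally have "contour_integral (circlepath z \<rho>) F = \<dots>" .
  moreover have "continuous_on (sphere z \<rho>) F"
    using holomorphic_on_imp_continuous_on[OF holomorphic_on_subset[OF holF path]] \<rho>(1) by simp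
  ultimately show ?thesis
    unfolding F_def[symmetric] using has_contour_integral_circlepath_if_continuous \<rho>(1) by fastforce
qed

lemma roots_eq_if_prod_eq:
  fixes lam :: "'a \<Rightarrow> complex" and mu :: "'b \<Rightarrow> complex"
  assumes "finite A" "finite B"
    and "\<And>z. (\<Prod>m\<in>A. z - lam m) = (\<Prod>l\<in>B. (z - mu l) ^ k l)"
    and "\<And>l. l \<in> B \<Longrightarrow> 1 \<le> k l"
  shows "lam ` A = mu ` B"
proof -
  have "z \<in> lam ` A \<longleftrightarrow> z \<in> mu ` B" for z
  proof -
    have "z \<in> lam ` A \<longleftrightarrow> (\<Prod>m\<in>A. z - lam m) = 0"
      using assms(1) by (auto simp: prod_zero_iff)
    also have "\<dots> \<longleftrightarrow> (\<Prod>l\<in>B. (z - mu l) ^ k l) = 0"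
      by (simp only: assms(3))
    also have "\<dots> \<longleftrightarrow> z \<in> mu ` B"
      using assms(2,4) by (force simp: prod_zero_iff)
    finally show ?thesis .
  qed
  then show ?thesis
    by blast
qed

lemma taylor_coeff_sums:
  assumes "f holomorphic_on ball 0 R" "norm u < R"
  shows "(\<lambda>j. taylor_coeff f j * u ^ j) sums f u"
  using holomorphic_power_series[OF assms(1), of u] assms(2)
  by (simp add: taylor_coeff_def)

lemma norm_taylor_coeff_le:
  assumes "f holomorphic_on cball 0 R" "0 < R" "\<And>u. norm u = R \<Longrightarrow> norm (f u) \<le> B"
  shows "norm (taylor_coeff f j) \<le> B / R ^ j"
proof -
  have "norm ((deriv ^^ j) f 0) \<le> fact j * B / R ^ j"
    using assms
    by (intro Cauchy_inequality holomorphic_on_subset[OF assms(1)] holomorphic_on_imp_continuous_on)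
       (auto simp: norm_minus_commute)
  then show ?thesis
    by (simp add: taylor_coeff_def norm_divide field_simps)
qed

lemma has_contour_integral_taylor_coeff:
  assumes "g holomorphic_on ball 0 1" "0 < \<rho>" "\<rho> < 1"
  shows "((\<lambda>w. g w / w ^ Suc j) has_contour_integral 2 * pi * \<i> * taylor_coeff g j) (circlepath 0 \<rho>)"
proof -
  have "cball 0 \<rho> \<subseteq> ball (0::complex) 1"
    using assms(3) by auto
  then have "((\<lambda>w. g w / (w - 0) ^ Suc j) has_contour_integral (2 * pi * \<i>) / fact j * (deriv ^^ j) g 0)
               (circlepath 0 \<rho>)"
    using assms
    by (intro Cauchy_has_contour_integral_higher_derivative_circlepath holomorphic_on_imp_continuous_on)
       (auto intro: holomorphic_on_subset)
  then show ?thesis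
    by (simp add: taylor_coeff_def)
qed

text \<open>On the unit circle \<open>reflect_unit_circle f\<close> agrees with \<open>cnj \<circ> f\<close>, which is how the
  \<open>L\<^sup>2\<close> pairings defining \<open>toeplitz_conj\<close> become contour integrals inside the disk.\<close>
definition reflect_unit_circle :: "(complex \<Rightarrow> complex) \<Rightarrow> complex \<Rightarrow> complex" where
  "reflect_unit_circle f w = cnj (f (1 / cnj w))"

lemma continuous_on_reflect_unit_circle:
  assumes "continuous_on (cball 0 R) f" "0 < \<rho>" "1 \<le> \<rho> * R"
  shows "continuous_on (sphere 0 \<rho>) (reflect_unit_circle f)"
proof -
  have "1 / cnj w \<in> cball 0 R" if "w \<in> sphere 0 \<rho>" for w
    using that assms(2,3) by (simp add: norm_divide field_simps)
  then have "continuous_on (sphere 0 \<rho>) (\<lambda>w. f (1 / cnj w))"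
    using assms(2)
    by (intro continuous_on_compose2[OF assms(1)] continuous_intros) auto
  then show ?thesis
    unfolding reflect_unit_circle_def by (intro continuous_intros)
qed

lemma continuous_on_sphere_reflect_div:
  assumes holf: "f holomorphic_on cball 0 R" and holh: "h holomorphic_on ball 0 1"
    and \<rho>: "0 < \<rho>" "\<rho> < 1" "1 < \<rho> * R"
  shows "continuous_on (sphere 0 \<rho>) (\<lambda>w. h w * reflect_unit_circle f w / w)"
proof -
  have "sphere 0 \<rho> \<subseteq> ball (0::complex) 1"
    using \<rho> by auto
  then have "continuous_on (sphere 0 \<rho>) h"
    by (rule holomorphic_on_imp_continuous_on[OF holomorphic_on_subset[OF holh]])
  moreover have "continuous_on (sphere 0 \<rho>) (reflect_unit_circle f)"
    using \<rho> continuous_on_reflect_unit_circle[OF holomorphic_on_imp_continuous_on[OF holf]] by simp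
  moreover have "0 \<notin> sphere 0 \<rho>"
    using \<rho>(1) by simp
  ultimately show ?thesis
    by (auto intro!: continuous_on_mult continuous_on_divide continuous_on_id)
qed

lemma reflect_unit_circle_sums:
  assumes holf: "f holomorphic_on ball 0 R" and w: "1 < norm w * R"
  shows "(\<lambda>j. cnj (taylor_coeff f j) / w ^ j) sums reflect_unit_circle f w"
proof -
  have "w \<noteq> 0"
    using w by auto
  then have "norm (1 / cnj w) < R"
    using w by (simp add: norm_divide field_simps mult.commute)
  then have "(\<lambda>j. taylor_coeff f j * (1 / cnj w) ^ j) sums f (1 / cnj w)"
    by (rule taylor_coeff_sums[OF holf])
  then have "(\<lambda>j. cnj (taylor_coeff f j * (1 / cnj w) ^ j)) sums reflect_unit_circle f w"
    unfolding reflect_unit_circle_def by (rule sums_cnj[THEN iffD2])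
  then show ?thesis
    by (simp add: power_divide)
qed

text \<open>Expanding the reflection of \<open>f\<close> at \<open>\<infinity>\<close> turns the integral into a series of Cauchy
  integrals for the Taylor coefficients of \<open>g\<close>; the hypothesis \<open>1 < \<rho> * R\<close> makes that expansion
  converge uniformly on the circle.\<close>
lemma sums_contour_integral_reflect:
  assumes holf: "f holomorphic_on cball 0 R" and holg: "g holomorphic_on ball 0 1"
    and \<rho>: "0 < \<rho>" "\<rho> < 1" "1 < \<rho> * R"
  shows "(\<lambda>j. cnj (taylor_coeff f j) * (2 * pi * \<i> * taylor_coeff g j)) sums
           contour_integral (circlepath 0 \<rho>) (\<lambda>w. g w * reflect_unit_circle f w / w)"
proof -
  define a where "a = taylor_coeff f"
  have R: "1 < R"
    using \<rho> mult_left_mono[of R 1 \<rho>] by linarith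
  have "sphere 0 \<rho> \<subseteq> ball (0::complex) 1"
    using \<rho> by auto
  then have "continuous_on (sphere 0 \<rho>) g"
    by (rule holomorphic_on_imp_continuous_on[OF holomorphic_on_subset[OF holg]])
  then obtain Hg where Hg: "\<And>w. w \<in> sphere 0 \<rho> \<Longrightarrow> norm (g w) \<le> Hg"
    by (rule continuous_on_compact_bound[OF compact_sphere]) blast
  obtain B where "0 \<le> B" and B: "\<And>u. u \<in> cball 0 R \<Longrightarrow> norm (f u) \<le> B"
    by (rule continuous_on_compact_bound[OF compact_cball holomorphic_on_imp_continuous_on[OF holf]]) blast
  have a_bound: "norm (a j) \<le> B / R ^ j" for j
    unfolding a_def using B R by (intro norm_taylor_coeff_le[OF holf]) auto
  define F where "F j w = cnj (a j) * (g w / w ^ Suc j)" for j w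
  define M where "M j = B * Hg / \<rho> * (1 / (R * \<rho>)) ^ j" for j
  have F_integral: "(F j has_contour_integral cnj (a j) * (2 * pi * \<i> * taylor_coeff g j)) (circlepath 0 \<rho>)" for j
    unfolding F_def by (intro has_contour_integral_lmul has_contour_integral_taylor_coeff holg \<rho>)
  have F_bound: "norm (F j w) \<le> M j" if "w \<in> sphere 0 \<rho>" for j w
  proof -
    have "norm (F j w) = norm (a j) * norm (g w) / \<rho> ^ Suc j"
      using that by (simp add: F_def norm_mult norm_divide norm_power)
    also have "\<dots> \<le> (B / R ^ j) * Hg / \<rho> ^ Suc j"
      using a_bound[of j] Hg[OF that] \<open>0 \<le> B\<close> R \<rho> by (intro divide_right_mono mult_mono) auto
    also have "\<dots> = M j"
      by (simp add: M_def field_simps power_mult_distrib)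
    finally show ?thesis .
  qed
  have "summable M"
    unfolding M_def using \<rho> R by (intro summable_mult summable_geometric) (auto simp: field_simps)
  have "(\<Sum>j. F j w) = g w * reflect_unit_circle f w / w" if "w \<in> sphere 0 \<rho>" for w
  proof -
    have "(\<lambda>j. g w / w * (cnj (a j) / w ^ j)) sums (g w / w * reflect_unit_circle f w)"
      unfolding a_def using that \<rho>(3)
      by (intro sums_mult reflect_unit_circle_sums holomorphic_on_subset[OF holf]) auto
    then show ?thesis
      by (simp add: F_def sums_iff mult_ac)
  qed
  then have "contour_integral (circlepath 0 \<rho>) (\<lambda>w. \<Sum>j. F j w) =
               contour_integral (circlepath 0 \<rho>) (\<lambda>w. g w * reflect_unit_circle f w / w)"
    using \<rho>(1) by (intro contour_integral_eq) simp
  with sums_contour_integral_circlepath[OF \<rho>(1) F_integral F_bound \<open>summable M\<close>] show ?thesis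
    by (simp add: a_def)
qed

lemma has_contour_integral_reflect_H2_inner:
  assumes holf: "f holomorphic_on cball 0 R" and holg: "g holomorphic_on ball 0 1"
    and \<rho>: "0 < \<rho>" "\<rho> < 1" "1 < \<rho> * R"
  shows "((\<lambda>w. g w * reflect_unit_circle f w / w) has_contour_integral
           2 * pi * \<i> * cnj (H2_inner f g)) (circlepath 0 \<rho>)"
proof -
  define X where "X = contour_integral (circlepath 0 \<rho>) (\<lambda>w. g w * reflect_unit_circle f w / w)"
  have "(\<lambda>j. cnj (taylor_coeff f j) * taylor_coeff g j) sums (X / (2 * pi * \<i>))"
    using sums_divide[OF sums_contour_integral_reflect[OF holf holg \<rho>], of "2 * pi * \<i>"]
    by (simp add: X_def field_simps)
  then have "(\<lambda>j. taylor_coeff f j * cnj (taylor_coeff g j)) sums cnj (X / (2 * pi * \<i>))"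
    using sums_cnj[THEN iffD2] by fastforce
  then have "H2_inner f g = cnj (X / (2 * pi * \<i>))"
    unfolding H2_inner_def by (rule sums_unique[symmetric])
  moreover have "continuous_on (sphere 0 \<rho>) (\<lambda>w. g w * reflect_unit_circle f w / w)"
    by (rule continuous_on_sphere_reflect_div[OF holf holg \<rho>])
  then have "((\<lambda>w. g w * reflect_unit_circle f w / w) has_contour_integral X) (circlepath 0 \<rho>)"
    unfolding X_def using \<rho>(1) by (intro has_contour_integral_circlepath_if_continuous) auto
  ultimately show ?thesis
    by simp
qed

lemma has_contour_integral_monomial_reflect:
  assumes holf: "f holomorphic_on cball 0 R" and holh: "h holomorphic_on ball 0 1"
    and \<rho>: "0 < \<rho>" "\<rho> < 1" "1 < \<rho> * R"
  shows "((\<lambda>w. w ^ k * h w * reflect_unit_circle f w / w) has_contour_integral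
           2 * pi * \<i> * cnj (H2_inner f (\<lambda>w. w ^ k * h w))) (circlepath 0 \<rho>)"
proof -
  have "(\<lambda>w. w ^ k * h w) holomorphic_on ball 0 1"
    by (intro holomorphic_intros holh)
  from has_contour_integral_reflect_H2_inner[OF holf this \<rho>] show ?thesis .
qed

lemma toeplitz_conj_eq_contour_integral:
  assumes holf: "f holomorphic_on cball 0 R" and holh: "h holomorphic_on ball 0 1"
    and \<rho>: "0 < \<rho>" "\<rho> < 1" "1 < \<rho> * R" and z: "norm z * \<rho> < 1"
  shows "toeplitz_conj h f z =
           cnj (contour_integral (circlepath 0 \<rho>)
                  (\<lambda>w. h w * reflect_unit_circle f w / w / (1 - cnj z * w)) / (2 * pi * \<i>))"
proof -
  define Q where "Q w = h w * reflect_unit_circle f w / w" for w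
  define c where "c k = H2_inner f (\<lambda>w. w ^ k * h w)" for k
  define J where "J = contour_integral (circlepath 0 \<rho>) (\<lambda>w. Q w / (1 - cnj z * w))"
  obtain B where B: "\<And>w. w \<in> sphere 0 \<rho> \<Longrightarrow> norm (Q w) \<le> B"
    unfolding Q_def
    by (rule continuous_on_compact_bound[OF compact_sphere continuous_on_sphere_reflect_div[OF holf holh \<rho>]]) blast
  define G where "G k w = cnj z ^ k * (w ^ k * Q w)" for k w
  have G_integral: "(G k has_contour_integral cnj z ^ k * (2 * pi * \<i> * cnj (c k))) (circlepath 0 \<rho>)" for k
    unfolding G_def c_def Q_def
    using has_contour_integral_lmul[OF has_contour_integral_monomial_reflect[OF holf holh \<rho>]]
    by (simp add: mult.assoc)
  have G_bound: "norm (G k w) \<le> B * (norm z * \<rho>) ^ k" if "w \<in> sphere 0 \<rho>" for k w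
  proof -
    have "norm (G k w) = (norm z * \<rho>) ^ k * norm (Q w)"
      using that by (simp add: G_def norm_mult norm_power power_mult_distrib)
    also have "\<dots> \<le> (norm z * \<rho>) ^ k * B"
      using B[OF that] \<rho>(1) by (intro mult_left_mono) auto
    finally show ?thesis
      by (simp add: mult.commute)
  qed
  have "summable (\<lambda>k. B * (norm z * \<rho>) ^ k)"
    using z \<rho>(1) by (intro summable_mult summable_geometric) auto
  have G_sum: "(\<Sum>k. G k w) = Q w / (1 - cnj z * w)" if "w \<in> sphere 0 \<rho>" for w
  proof -
    have "norm (cnj z * w) < 1"
      using that z by (simp add: norm_mult)
    then have "(\<lambda>k. (cnj z * w) ^ k * Q w) sums (Q w / (1 - cnj z * w))"
      using sums_mult2[OF geometric_sums] by fastforce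
    then show ?thesis
      by (simp add: sums_iff G_def power_mult_distrib mult_ac)
  qed
  have "contour_integral (circlepath 0 \<rho>) (\<lambda>w. \<Sum>k. G k w) = J"
    unfolding J_def using \<rho>(1) by (intro contour_integral_eq) (simp add: G_sum)
  then have J_sums: "(\<lambda>k. cnj z ^ k * (2 * pi * \<i> * cnj (c k))) sums J"
    using sums_contour_integral_circlepath[OF \<rho>(1) G_integral G_bound \<open>summable _\<close>] by simp
  have "(\<lambda>k. cnj (c k * z ^ k)) sums (J / (2 * pi * \<i>))"
    using sums_divide[OF J_sums, of "2 * pi * \<i>"] by (simp add: field_simps)
  then have "(\<lambda>k. c k * z ^ k) sums cnj (J / (2 * pi * \<i>))"
    using sums_cnj by fastforce
  then have "(\<Sum>k. c k * z ^ k) = cnj (J / (2 * pi * \<i>))"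
    by (rule sums_unique[symmetric])
  then show ?thesis
    unfolding toeplitz_conj_def c_def J_def Q_def .
qed

lemma norm_H2_inner_monomial_le:
  assumes holf: "f holomorphic_on cball 0 R" and holh: "h holomorphic_on ball 0 1"
    and \<rho>: "0 < \<rho>" "\<rho> < 1" "1 < \<rho> * R"
  obtains B where "\<And>k. norm (H2_inner f (\<lambda>w. w ^ k * h w)) \<le> B * \<rho> ^ k"
proof -
  obtain B where "0 \<le> B" and B: "\<And>w. w \<in> sphere 0 \<rho> \<Longrightarrow> norm (h w * reflect_unit_circle f w / w) \<le> B"
    by (rule continuous_on_compact_bound[OF compact_sphere continuous_on_sphere_reflect_div[OF holf holh \<rho>]]) blast
  have "norm (H2_inner f (\<lambda>w. w ^ k * h w)) \<le> (B * \<rho>) * \<rho> ^ k" for k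
  proof -
    have "norm (2 * pi * \<i> * cnj (H2_inner f (\<lambda>w. w ^ k * h w))) \<le> B * \<rho> ^ k * (2 * pi * \<rho>)"
    proof (rule has_contour_integral_bound_circlepath[OF has_contour_integral_monomial_reflect[OF holf holh \<rho>]])
      fix w :: complex
      assume w: "norm (w - 0) = \<rho>"
      then have "norm (w ^ k * h w * reflect_unit_circle f w / w) =
                   \<rho> ^ k * norm (h w * reflect_unit_circle f w / w)"
        by (simp add: norm_mult norm_power norm_divide)
      also have "\<dots> \<le> \<rho> ^ k * B"
        using B[of w] w \<rho>(1) by (intro mult_left_mono) auto
      finally show "norm (w ^ k * h w * reflect_unit_circle f w / w) \<le> B * \<rho> ^ k"
        by (simp add: mult.commute)
    qed (use \<open>0 \<le> B\<close> \<rho> in auto)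
    also have "B * \<rho> ^ k * (2 * pi * \<rho>) = 2 * pi * ((B * \<rho>) * \<rho> ^ k)"
      by (simp add: mult_ac)
    finally show ?thesis
      by (simp add: norm_mult mult_le_cancel_left_pos pi_gt_zero)
  qed
  then show ?thesis
    by (rule that)
qed

lemma isCont_toeplitz_conj:
  assumes holf: "f holomorphic_on cball 0 R" and holh: "h holomorphic_on ball 0 1"
    and \<rho>: "0 < \<rho>" "\<rho> < 1" "1 < \<rho> * R" and z: "norm z * \<rho> < 1"
  shows "isCont (toeplitz_conj h f) z"
proof -
  define c where "c k = H2_inner f (\<lambda>w. w ^ k * h w)" for k
  obtain B where c_bound: "\<And>k. norm (c k) \<le> B * \<rho> ^ k"
    unfolding c_def by (rule norm_H2_inner_monomial_le[OF holf holh \<rho>]) blast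
  define K where "K = (norm z + 1 / \<rho>) / 2"
  have "norm z < 1 / \<rho>"
    using z \<rho>(1) by (simp add: field_simps)
  then have zK: "norm z < K" and "K < 1 / \<rho>" "0 < K"
    unfolding K_def using \<rho>(1) by (auto intro: add_nonneg_pos)
  then have "K * \<rho> < 1"
    using \<rho>(1) by (simp add: field_simps)
  then have geometric: "summable (\<lambda>k. B * (K * \<rho>) ^ k)"
    using \<open>0 < K\<close> \<rho>(1) by (intro summable_mult summable_geometric) auto
  have dominated: "norm (c k * complex_of_real K ^ k) \<le> B * (K * \<rho>) ^ k" for k
  proof -
    have "norm (c k * complex_of_real K ^ k) = norm (c k) * K ^ k"
      using \<open>0 < K\<close> by (simp add: norm_mult norm_power)
    also have "\<dots> \<le> B * \<rho> ^ k * K ^ k"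
      using c_bound \<open>0 < K\<close> by (intro mult_right_mono) auto
    finally show ?thesis
      by (simp add: power_mult_distrib mult_ac)
  qed
  have "isCont (\<lambda>x. \<Sum>k. c k * x ^ k) z"
    using summable_comparison_test'[OF geometric dominated] by (rule isCont_powser) (use zK in simp)
  moreover have "toeplitz_conj h f = (\<lambda>x. \<Sum>k. c k * x ^ k)"
    by (simp add: fun_eq_iff toeplitz_conj_def c_def)
  ultimately show ?thesis
    by (simp only:)
qed

lemma separating_radii:
  fixes a :: "'a \<Rightarrow> complex"
  assumes "finite A" "\<And>m. m \<in> A \<Longrightarrow> norm (a m) < 1"
  obtains \<rho> R where "0 < \<rho>" "\<rho> < 1" "1 < \<rho> * R"
    "\<And>m. m \<in> A \<Longrightarrow> norm (a m) < \<rho>" "\<And>m. m \<in> A \<Longrightarrow> norm (a m) * R < 1"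
proof -
  define \<sigma> where "\<sigma> = Max (insert 0 ((\<lambda>m. norm (a m)) ` A))"
  have \<sigma>: "0 \<le> \<sigma>" "\<sigma> < 1" "\<And>m. m \<in> A \<Longrightarrow> norm (a m) \<le> \<sigma>"
    using assms by (auto simp: \<sigma>_def)
  show ?thesis
  proof
    show "0 < (3 + \<sigma>) / 4" "(3 + \<sigma>) / 4 < 1" "1 < (3 + \<sigma>) / 4 * (2 / (1 + \<sigma>))"
      using \<sigma> by (auto simp: field_simps)
    show "norm (a m) < (3 + \<sigma>) / 4" "norm (a m) * (2 / (1 + \<sigma>)) < 1" if "m \<in> A" for m
      using \<sigma>(1,2) \<sigma>(3)[OF that] by (auto simp: field_simps)
  qed
qed

lemma gamma_fn_holomorphic_on_cball:
  assumes "1 \<le> n" "\<And>m. m \<in> {1..n} \<Longrightarrow> norm (lam m) * R < 1"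
  shows "gamma_fn lam n holomorphic_on cball 0 R"
proof -
  have "1 - cnj (lam m) * u \<noteq> 0" if "m \<in> {1..n}" "u \<in> cball 0 R" for m u
  proof
    assume "1 - cnj (lam m) * u = 0"
    then have "1 = norm (cnj (lam m) * u)"
      by simp
    also have "\<dots> \<le> norm (lam m) * R"
      using that by (simp add: norm_mult mult_left_mono)
    finally show False
      using assms(2)[OF that(1)] by simp
  qed
  then show ?thesis
    unfolding gamma_fn_def bfac_def using assms(1) by (auto intro!: holomorphic_intros)
qed

lemma reflect_gamma_fn:
  assumes "1 \<le> n" "w \<noteq> 0" "\<And>m. m \<in> {1..n} \<Longrightarrow> w \<noteq> lam m"
  shows "reflect_unit_circle (gamma_fn lam n) w / w =
           sqrt (1 - (norm (lam n))\<^sup>2) * (\<Prod>m=1..n-1. 1 - cnj (lam m) * w) / (\<Prod>m=1..n. w - lam m)"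
proof -
  define c where "c = complex_of_real (sqrt (1 - (norm (lam n))\<^sup>2))"
  have bfac: "cnj (bfac (lam m) (1 / cnj w)) = (1 - cnj (lam m) * w) / (w - lam m)"
    if "m \<in> {1..n}" for m
    using assms(2) assms(3)[OF that] by (simp add: bfac_def field_simps)
  have first: "cnj (c / (1 - cnj (lam n) * (1 / cnj w))) / w = c / (w - lam n)"
    using assms by (simp add: c_def field_simps)
  have "reflect_unit_circle (gamma_fn lam n) w / w =
          cnj (c / (1 - cnj (lam n) * (1 / cnj w))) / w * (\<Prod>m=1..n-1. cnj (bfac (lam m) (1 / cnj w)))"
    unfolding reflect_unit_circle_def gamma_fn_def c_def[symmetric] by (simp add: cnj_prod)
  also have "\<dots> = c / (w - lam n) * ((\<Prod>m=1..n-1. 1 - cnj (lam m) * w) / (\<Prod>m=1..n-1. w - lam m))"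
    unfolding first prod_dividef[symmetric] using bfac by (intro arg_cong2[where f = "(*)"] prod.cong) auto
  also have "\<dots> = c * (\<Prod>m=1..n-1. 1 - cnj (lam m) * w) / ((\<Prod>m=1..n-1. w - lam m) * (w - lam n))"
    by (simp add: mult.commute)
  also have "(\<Prod>m=1..n-1. w - lam m) * (w - lam n) = (\<Prod>m=1..n. w - lam m)"
    using assms(1) by (cases n) (auto simp: prod.cl_ivl_Suc)
  finally show ?thesis
    unfolding c_def .
qed

lemma has_contour_integral_reflect_gamma_fn:
  fixes n r :: nat
  assumes "1 \<le> n" and holh: "h holomorphic_on ball 0 1"
    and mu: "inj_on mu {1..r}" and k: "\<forall>l\<in>{1..r}. k l \<ge> 1"
    and factor: "\<forall>z. (\<Prod>l=1..n. z - lam l) = (\<Prod>l=1..r. (z - mu l) ^ k l)"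
    and "norm \<zeta> = 1" and \<rho>: "0 < \<rho>" "\<rho> < 1" and lam: "\<And>m. m \<in> {1..n} \<Longrightarrow> norm (lam m) < \<rho>"
  shows "((\<lambda>w. h w * reflect_unit_circle (gamma_fn lam n) w / w / (1 - cnj \<zeta> * w)) has_contour_integral
           complex_of_real (sqrt (1 - (norm (lam n))\<^sup>2)) *
           (2 * pi * \<i> * (\<Sum>l=1..r. (deriv ^^ (k l - 1))
              (\<lambda>w. h w * (\<Prod>m=1..n-1. 1 - cnj (lam m) * w) /
                    ((1 - cnj \<zeta> * w) * (\<Prod>j\<in>{1..r}-{l}. (w - mu j) ^ k j)))
              (mu l) / fact (k l - 1)))) (circlepath 0 \<rho>)"
proof -
  define c where "c = complex_of_real (sqrt (1 - (norm (lam n))\<^sup>2))"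
  define G where "G w = h w * (\<Prod>m=1..n-1. 1 - cnj (lam m) * w) / (1 - cnj \<zeta> * w)" for w
  have "1 - cnj \<zeta> * w \<noteq> 0" if "w \<in> ball 0 1" for w
  proof
    assume "1 - cnj \<zeta> * w = 0"
    then have "norm (cnj \<zeta> * w) = 1"
      by (metis eq_iff_diff_eq_0 norm_one)
    then show False
      using that \<open>norm \<zeta> = 1\<close> by (simp add: norm_mult)
  qed
  then have "G holomorphic_on ball 0 1"
    unfolding G_def by (intro holomorphic_intros holh) auto
  moreover have "lam ` {1..n} = mu ` {1..r}"
    using factor k by (intro roots_eq_if_prod_eq) auto
  then have "norm (mu l - 0) < \<rho>" if "l \<in> {1..r}" for l
    using lam that by (metis diff_zero imageE imageI)
  ultimately have integral: "((\<lambda>w. c * (G w / (\<Prod>l=1..r. (w - mu l) ^ k l))) has_contour_integral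
                     c * (2 * pi * \<i> * (\<Sum>l=1..r. (deriv ^^ (k l - 1))
                        (\<lambda>w. G w / (\<Prod>j\<in>{1..r}-{l}. (w - mu j) ^ k j)) (mu l) / fact (k l - 1))))
                   (circlepath 0 \<rho>)"
    using \<rho> mu k by (intro has_contour_integral_lmul has_contour_integral_circlepath_div_prod_powers) auto
  have integrand: "h w * reflect_unit_circle (gamma_fn lam n) w / w / (1 - cnj \<zeta> * w) =
                   c * (G w / (\<Prod>l=1..r. (w - mu l) ^ k l))" if "w \<in> sphere 0 \<rho>" for w
  proof -
    have "w \<noteq> 0" "\<And>m. m \<in> {1..n} \<Longrightarrow> w \<noteq> lam m"
      using that lam \<rho>(1) by force+
    then show ?thesis
      using reflect_gamma_fn[OF \<open>1 \<le> n\<close>] factor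
      by (simp add: G_def c_def divide_inverse mult_ac)
  qed
  have derivand: "(\<lambda>w. G w / (\<Prod>j\<in>{1..r}-{l}. (w - mu j) ^ k j)) =
      (\<lambda>w. h w * (\<Prod>m=1..n-1. 1 - cnj (lam m) * w) /
            ((1 - cnj \<zeta> * w) * (\<Prod>j\<in>{1..r}-{l}. (w - mu j) ^ k j)))" for l
    by (simp add: G_def fun_eq_iff)
  show ?thesis
    unfolding c_def[symmetric] derivand[symmetric]
    by (rule has_contour_integral_eq[OF integral]) (use integrand \<rho>(1) in auto)
qed

theorem proposition3p2:
  fixes lam :: "nat \<Rightarrow> complex" and h :: "complex \<Rightarrow> complex" and n r :: nat
    and mu :: "nat \<Rightarrow> complex" and k :: "nat \<Rightarrow> nat" and \<zeta> :: complex
  assumes "blaschke_seq lam"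
    and "h \<in> H2"
    and "n \<ge> 1"
    and "inj_on mu {1..r}"
    and "\<forall>l\<in>{1..r}. k l \<ge> 1"
    and "\<forall>z. (\<Prod>l=1..n. z - lam l) = (\<Prod>l=1..r. (z - mu l) ^ k l)"
    and "norm \<zeta> = 1"
  shows "(toeplitz_conj h (gamma_fn lam n) \<longlongrightarrow>
           complex_of_real (sqrt (1 - (norm (lam n))\<^sup>2)) *
           (\<Sum>l=1..r. cnj ((deriv ^^ (k l - 1))
              (\<lambda>w. h w * (\<Prod>m=1..n-1. 1 - cnj (lam m) * w) /
                    ((1 - cnj \<zeta> * w) * (\<Prod>j\<in>{1..r}-{l}. (w - mu j) ^ k j)))
              (mu l)) / of_nat (fact (k l - 1))))
         (at \<zeta> within ball 0 1)"
proof -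
  have holh: "h holomorphic_on ball 0 1"
    using assms(2) by (simp add: H2_def)
  obtain \<rho> R where \<rho>: "0 < \<rho>" "\<rho> < 1" "1 < \<rho> * R"
    and lam_\<rho>: "\<And>m. m \<in> {1..n} \<Longrightarrow> norm (lam m) < \<rho>"
    and lam_R: "\<And>m. m \<in> {1..n} \<Longrightarrow> norm (lam m) * R < 1"
    by (rule separating_radii[of "{1..n}" lam]) (use assms(1) in \<open>auto simp: blaschke_seq_def\<close>)
  have hol\<gamma>: "gamma_fn lam n holomorphic_on cball 0 R"
    using assms(3) lam_R by (rule gamma_fn_holomorphic_on_cball)
  have \<zeta>\<rho>: "norm \<zeta> * \<rho> < 1"
    using assms(7) \<rho> by simp
  define c where "c = complex_of_real (sqrt (1 - (norm (lam n))\<^sup>2))"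
  define D where "D l = (deriv ^^ (k l - 1))
              (\<lambda>w. h w * (\<Prod>m=1..n-1. 1 - cnj (lam m) * w) /
                    ((1 - cnj \<zeta> * w) * (\<Prod>j\<in>{1..r}-{l}. (w - mu j) ^ k j))) (mu l)" for l
  have "toeplitz_conj h (gamma_fn lam n) \<zeta> = cnj (c * (2 * pi * \<i> * (\<Sum>l=1..r. D l / fact (k l - 1))) / (2 * pi * \<i>))"
    unfolding c_def D_def
    by (simp only: toeplitz_conj_eq_contour_integral[OF hol\<gamma> holh \<rho> \<zeta>\<rho>]
        contour_integral_unique[OF has_contour_integral_reflect_gamma_fn[OF assms(3) holh assms(4-7) \<rho>(1,2) lam_\<rho>]])
  also have "\<dots> = cnj (c * (\<Sum>l=1..r. D l / fact (k l - 1)))"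
    by (subst mult.left_commute, subst nonzero_mult_div_cancel_left) auto
  also have "\<dots> = c * (\<Sum>l=1..r. cnj (D l) / of_nat (fact (k l - 1)))"
    by (simp add: c_def cnj_sum)
  finally have "(toeplitz_conj h (gamma_fn lam n) \<longlongrightarrow> c * (\<Sum>l=1..r. cnj (D l) / of_nat (fact (k l - 1))))
                  (at \<zeta> within ball 0 1)"
    using continuous_at_imp_continuous_at_within[OF isCont_toeplitz_conj[OF hol\<gamma> holh \<rho> \<zeta>\<rho>]]
    by (simp add: continuous_within)
  then show ?thesis
    unfolding c_def D_def .
qed

end
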